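(* Let $\alpha\in(0,1]$, $x\in S$, $\pi\in\Pi$. The functional $\rho^\pi_{\alpha,x}: L^\infty(\Omega,\mathcal{B}(\Omega),P_x^\pi)\to\mathbb{R}$ is coherent, i.e., for all $Y_1,Y_2\in L^\infty$: (monotonicity) $Y_1\le Y_2$ a.e. implies $\rho^\pi_{\alpha,x}(Y_1)\le\rho^\pi_{\alpha,x}(Y_2)$; (subadditivity) $\rho^\pi_{\alpha,x}(Y_1+Y_2)\le \rho^\pi_{\alpha,x}(Y_1)+\rho^\pi_{\alpha,x}(Y_2)$; (translation equivariance) $\rho^\pi_{\alpha,x}(Y_1+a)=\rho^\pi_{\alpha,x}(Y_1)+a$ for $a\in\mathbb{R}$; (positive homogeneity) $\rho^\pi_{\alpha,x}(\lambda Y_1)=\lambda\rho^\pi_{\alpha,x}(Y_1)$ for $0\le\lambda<\infty$. Moreover, for every $Y\in L^\infty(\Omega,\mathcal{B}(\Omega),P_x^\pi)$, $$E_x^\pi(Y)\le \rho^\pi_{\alpha,x}(Y)\le \mathrm{CVaR}^\pi_{\alpha,x}(Y).$$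
   Context: Setting: $S$, $A$, $W$ are Borel spaces, $T\in\mathbb{N}$, $\Omega=(S\times A)^T\times S$ with Borel $\sigma$-algebra $\mathcal{B}(\Omega)$; $\omega=(x_0,u_0,\dots,x_{T-1},u_{T-1},x_T)$, $X_t(\omega)=x_t$, $U_t(\omega)=u_t$. $f:S\times A\times W\to S$ is Borel measurable, $P_D$ a distribution on $W$, and $Q(B\mid x,u)=P_D(\{d\in W: f(x,u,d)\in B\})$. $\Pi$ is the set of randomized history-dependent policies (Borel stochastic kernels $\pi_t$ on $A$ given $(S\times A)^t\times S$, $t=0,\dots,T-1$), and $P_x^\pi$ the induced probability measure on $\Omega$ with $X_0=x$, $U_t\sim\pi_t(\cdot\mid\text{history})$, $X_{t+1}\sim Q(\cdot\mid X_t,U_t)$; $E_x^\pi$ its expectation. For integrable $Y$, $\mathrm{CVaR}^\pi_{\alpha,x}(Y):=\inf_{s\in\mathbb{R}}(s+\tfrac1\alpha E_x^\pi(\max(Y-s,0)))$. For $(x,u)\in S\times A$, $\mathcal{R}_\alpha(x,u)$ is the set of Borel-measurable $\nu:S\to\mathbb{R}$ with $0\le\nu\le\alpha^{-1/T}$ $Q(\cdot\mid x,u)$-a.e. and $\int_S\nu\,\mathrm{d}Q(\cdot\mid x,u)=1$. $\mathcal{D}_\alpha$ is the set of tuples $(\xi_0,\dots,\xi_{T-1})$ where each $\xi_t(\cdot\mid\cdot,\cdot):S\times S\times A\to\mathbb{R}$ is Borel measurable and $\xi_t(\cdot\mid x,u)\in\mathcal{R}_\alpha(x,u)$ for every $(x,u)\in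 S\times A$. For $Y\in L^\infty(\Omega,\mathcal{B}(\Omega),P_x^\pi)$, $$\rho^\pi_{\alpha,x}(Y):=\sup_{(\xi_0,\dots,\xi_{T-1})\in\mathcal{D}_\alpha}\int_\Omega Y(\omega)\prod_{t=0}^{T-1}\xi_t(x_{t+1}\mid x_t,u_t)\,\mathrm{d}P_x^\pi(\omega).$$ *)

theory Defs
  imports "HOL-Probability.Probability"
begin

text \<open>Histories of length t: states x_0..x_t (extensional on {..t}) and actions
  u_0..u_{t-1} (extensional on {..<t}), with the Borel product sigma-algebra.
  The sample space Omega is H T.\<close>

definition H :: "nat \<Rightarrow> ((nat \<Rightarrow> 's::topological_space) \<times> (nat \<Rightarrow> 'a::topological_space)) measure" where
  "H t = (PiM {..t} (\<lambda>_. borel)) \<Otimes>\<^sub>M (PiM {..<t} (\<lambda>_. borel))"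

definition kernelQ :: "'w measure \<Rightarrow> ('s::topological_space \<Rightarrow> 'a \<Rightarrow> 'w \<Rightarrow> 's) \<Rightarrow> 's \<Rightarrow> 'a \<Rightarrow> 's measure" where
  "kernelQ PD f x u = distr PD borel (\<lambda>d. f x u d)"

definition is_policy :: "nat \<Rightarrow> (nat \<Rightarrow> (nat \<Rightarrow> 's::topological_space) \<times> (nat \<Rightarrow> 'a::topological_space) \<Rightarrow> 'a measure) \<Rightarrow> bool" where
  "is_policy T \<pi> \<longleftrightarrow> (\<forall>t<T. \<pi> t \<in> H t \<rightarrow>\<^sub>M prob_algebra borel)"

fun Ptraj :: "('s::topological_space \<Rightarrow> 'a::topological_space \<Rightarrow> 's measure)
    \<Rightarrow> (nat \<Rightarrow> (nat \<Rightarrow> 's) \<times> (nat \<Rightarrow> 'a) \<Rightarrow> 'a measure) \<Rightarrow> 's \<Rightarrow> nat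
    \<Rightarrow> ((nat \<Rightarrow> 's) \<times> (nat \<Rightarrow> 'a)) measure" where
  "Ptraj Q \<pi> x 0 = return (H 0) (restrict (\<lambda>_. x) {..0}, restrict (\<lambda>_. undefined) {..<0})"
| "Ptraj Q \<pi> x (Suc t) =
     bind (Ptraj Q \<pi> x t) (\<lambda>h. bind (\<pi> t h) (\<lambda>u. bind (Q (fst h t) u) (\<lambda>y.
        return (H (Suc t))
          (restrict ((fst h)(Suc t := y)) {..Suc t}, restrict ((snd h)(t := u)) {..<Suc t}))))"

definition Px :: "'w measure \<Rightarrow> ('s::topological_space \<Rightarrow> 'a::topological_space \<Rightarrow> 'w \<Rightarrow> 's)
    \<Rightarrow> (nat \<Rightarrow> (nat \<Rightarrow> 's) \<times> (nat \<Rightarrow> 'a) \<Rightarrow> 'a measure) \<Rightarrow> nat \<Rightarrow> 's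
    \<Rightarrow> ((nat \<Rightarrow> 's) \<times> (nat \<Rightarrow> 'a)) measure" where
  "Px PD f \<pi> T x = Ptraj (kernelQ PD f) \<pi> x T"

text \<open>Essentially bounded measurable real random variables (representatives of L^infinity).\<close>
definition Linf :: "'b measure \<Rightarrow> ('b \<Rightarrow> real) \<Rightarrow> bool" where
  "Linf M Y \<longleftrightarrow> Y \<in> borel_measurable M \<and> (\<exists>B. AE \<omega> in M. \<bar>Y \<omega>\<bar> \<le> B)"

definition Rset :: "real \<Rightarrow> nat \<Rightarrow> 's::topological_space measure \<Rightarrow> ('s \<Rightarrow> real) set" where
  "Rset \<alpha> T M = {\<nu>. \<nu> \<in> borel_measurable borel
      \<and> (AE y in M. 0 \<le> \<nu> y \<and> \<nu> y \<le> \<alpha> powr (- 1 / real T))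
      \<and> integral\<^sup>L M \<nu> = 1}"

text \<open>The set D_alpha; xi t y x u stands for xi_t(y | x, u). Only t < T is relevant.\<close>
definition Dset :: "('s::topological_space \<Rightarrow> 'a::topological_space \<Rightarrow> 's measure) \<Rightarrow> nat \<Rightarrow> real
    \<Rightarrow> (nat \<Rightarrow> 's \<Rightarrow> 's \<Rightarrow> 'a \<Rightarrow> real) set" where
  "Dset Q T \<alpha> = {\<xi>. \<forall>t<T.
      (\<lambda>(y, x, u). \<xi> t y x u) \<in> borel_measurable (borel \<Otimes>\<^sub>M borel \<Otimes>\<^sub>M borel)
      \<and> (\<forall>x u. (\<lambda>y. \<xi> t y x u) \<in> Rset \<alpha> T (Q x u))}"

definition rho :: "('s::topological_space \<Rightarrow> 'a::topological_space \<Rightarrow> 's measure) \<Rightarrow> nat \<Rightarrow> real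
    \<Rightarrow> ((nat \<Rightarrow> 's) \<times> (nat \<Rightarrow> 'a)) measure \<Rightarrow> ((nat \<Rightarrow> 's) \<times> (nat \<Rightarrow> 'a) \<Rightarrow> real) \<Rightarrow> real" where
  "rho Q T \<alpha> P Y = (SUP \<xi> \<in> Dset Q T \<alpha>.
      \<integral>\<omega>. Y \<omega> * (\<Prod>t<T. \<xi> t (fst \<omega> (Suc t)) (fst \<omega> t) (snd \<omega> t)) \<partial>P)"

definition CVaR :: "real \<Rightarrow> 'b measure \<Rightarrow> ('b \<Rightarrow> real) \<Rightarrow> real" where
  "CVaR \<alpha> P Y = (INF s::real. s + 1 / \<alpha> * (\<integral>\<omega>. max (Y \<omega> - s) 0 \<partial>P))"

end

theory Submission
  imports Defs
begin

text \<open>Each \<xi> \<in> D_alpha yields the density Z = \<Prod>t<T. \<xi>_t(x_(t+1) | x_t, u_t) on histories.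
  Integrating out the last transition and using \<integral> \<xi>_t dQ = 1 shows by induction along the
  trajectory that E Z = 1, and 0 \<le> Z \<le> (alpha powr (-1/T))^T = 1/alpha.  Hence rho(Y) is the
  supremum of E[Y Z] over a set of probability densities bounded by 1/alpha that contains Z = 1.
  Any such supremum is coherent and dominates E Y; it is bounded by CVaR because
  E[Y Z] = s + E[(Y - s) Z] \<le> s + E[max (Y - s) 0] / alpha for every s.\<close>

lemma Linf_integrable:
  assumes "finite_measure P" "Linf P Y"
  shows "integrable P Y"
proof -
  from \<open>Linf P Y\<close> obtain B where "Y \<in> borel_measurable P" "AE \<omega> in P. norm (Y \<omega>) \<le> B"
    unfolding Linf_def by auto
  then show ?thesis
    using finite_measure.integrable_const_bound[OF assms(1)] by blast
qed

lemma Linf_mult: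
  assumes "Linf P Y1" "Linf P Y2"
  shows "Linf P (\<lambda>\<omega>. Y1 \<omega> * Y2 \<omega>)"
proof -
  from assms obtain B1 B2 where "Y1 \<in> borel_measurable P" "Y2 \<in> borel_measurable P"
    and "AE \<omega> in P. \<bar>Y1 \<omega>\<bar> \<le> B1" "AE \<omega> in P. \<bar>Y2 \<omega>\<bar> \<le> B2"
    unfolding Linf_def by auto
  moreover from this(3,4) have "AE \<omega> in P. \<bar>Y1 \<omega> * Y2 \<omega>\<bar> \<le> B1 * B2"
    by eventually_elim (auto simp: abs_mult intro: mult_mono)
  ultimately show ?thesis
    unfolding Linf_def by auto
qed

definition upper_expectation ::
    "'b measure \<Rightarrow> 'd set \<Rightarrow> ('d \<Rightarrow> 'b \<Rightarrow> real) \<Rightarrow> ('b \<Rightarrow> real) \<Rightarrow> real" where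
  "upper_expectation P D Z Y = (SUP d\<in>D. \<integral>\<omega>. Y \<omega> * Z d \<omega> \<partial>P)"

locale bounded_densities = prob_space P for P :: "'b measure" +
  fixes D :: "'d set" and Z :: "'d \<Rightarrow> 'b \<Rightarrow> real" and \<alpha> :: real
  assumes density_measurable: "d \<in> D \<Longrightarrow> Z d \<in> borel_measurable P"
    and density_bounds: "d \<in> D \<Longrightarrow> AE \<omega> in P. 0 \<le> Z d \<omega> \<and> Z d \<omega> \<le> 1 / \<alpha>"
    and density_integral: "d \<in> D \<Longrightarrow> (\<integral>\<omega>. Z d \<omega> \<partial>P) = 1"
    and constant_density: "\<exists>d\<in>D. \<forall>\<omega>. Z d \<omega> = 1"
begin

lemma densities_nonempty: "D \<noteq> {}"
  using constant_density by blast

lemma Linf_density: "d \<in> D \<Longrightarrow> Linf P (Z d)"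
  using density_measurable density_bounds[THEN AE_mp, of d "\<lambda>\<omega>. \<bar>Z d \<omega>\<bar> \<le> 1 / \<alpha>"]
  unfolding Linf_def by auto

lemma integrable_weighted:
  "Linf P Y \<Longrightarrow> d \<in> D \<Longrightarrow> integrable P (\<lambda>\<omega>. Y \<omega> * Z d \<omega>)"
  by (intro Linf_integrable finite_measure_axioms Linf_mult Linf_density)

lemma integrable_density: "d \<in> D \<Longrightarrow> integrable P (Z d)"
  by (intro Linf_integrable finite_measure_axioms Linf_density)

lemma weighted_expectation_mono:
  assumes "integrable P (\<lambda>\<omega>. Y1 \<omega> * Z d \<omega>)" "integrable P (\<lambda>\<omega>. Y2 \<omega> * Z d \<omega>)"
    and "d \<in> D" "AE \<omega> in P. Y1 \<omega> \<le> Y2 \<omega>"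
  shows "(\<integral>\<omega>. Y1 \<omega> * Z d \<omega> \<partial>P) \<le> (\<integral>\<omega>. Y2 \<omega> * Z d \<omega> \<partial>P)"
  using assms(1,2)
proof (rule integral_mono_AE)
  show "AE \<omega> in P. Y1 \<omega> * Z d \<omega> \<le> Y2 \<omega> * Z d \<omega>"
    using density_bounds[OF \<open>d \<in> D\<close>] assms(4) by eventually_elim (auto intro: mult_right_mono)
qed

lemma bdd_above_weighted_expectation:
  assumes "Linf P Y"
  shows "bdd_above ((\<lambda>d. \<integral>\<omega>. Y \<omega> * Z d \<omega> \<partial>P) ` D)"
proof -
  from assms obtain B where "AE \<omega> in P. \<bar>Y \<omega>\<bar> \<le> B"
    unfolding Linf_def by auto
  then have B: "AE \<omega> in P. Y \<omega> \<le> B"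
    by eventually_elim auto
  have "(\<integral>\<omega>. Y \<omega> * Z d \<omega> \<partial>P) \<le> B" if "d \<in> D" for d
  proof -
    have "(\<integral>\<omega>. Y \<omega> * Z d \<omega> \<partial>P) \<le> (\<integral>\<omega>. B * Z d \<omega> \<partial>P)"
      using that B
      by (intro weighted_expectation_mono integrable_weighted[OF assms]) (auto intro: integrable_density)
    also have "\<dots> = B"
      using density_integral[OF that] by simp
    finally show ?thesis .
  qed
  then show ?thesis
    by (intro bdd_aboveI2)
qed

lemma upper_expectation_mono:
  assumes "Linf P Y1" "Linf P Y2" "AE \<omega> in P. Y1 \<omega> \<le> Y2 \<omega>"
  shows "upper_expectation P D Z Y1 \<le> upper_expectation P D Z Y2"
  unfolding upper_expectation_def
proof (rule cSUP_mono[OF densities_nonempty bdd_above_weighted_expectation[OF assms(2)]])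
  fix d assume "d \<in> D"
  with assms show "\<exists>d'\<in>D. (\<integral>\<omega>. Y1 \<omega> * Z d \<omega> \<partial>P) \<le> (\<integral>\<omega>. Y2 \<omega> * Z d' \<omega> \<partial>P)"
    by (blast intro: weighted_expectation_mono integrable_weighted)
qed

lemma upper_expectation_add:
  assumes "Linf P Y1" "Linf P Y2"
  shows "upper_expectation P D Z (\<lambda>\<omega>. Y1 \<omega> + Y2 \<omega>)
    \<le> upper_expectation P D Z Y1 + upper_expectation P D Z Y2"
  unfolding upper_expectation_def
proof (rule cSUP_least[OF densities_nonempty])
  fix d assume "d \<in> D"
  have "(\<integral>\<omega>. (Y1 \<omega> + Y2 \<omega>) * Z d \<omega> \<partial>P) = (\<integral>\<omega>. Y1 \<omega> * Z d \<omega> \<partial>P) + (\<integral>\<omega>. Y2 \<omega> * Z d \<omega> \<partial>P)"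
    using assms \<open>d \<in> D\<close> by (simp add: distrib_right integrable_weighted)
  also have "\<dots> \<le> (SUP d\<in>D. \<integral>\<omega>. Y1 \<omega> * Z d \<omega> \<partial>P) + (SUP d\<in>D. \<integral>\<omega>. Y2 \<omega> * Z d \<omega> \<partial>P)"
    using assms \<open>d \<in> D\<close> by (intro add_mono cSUP_upper bdd_above_weighted_expectation)
  finally show "(\<integral>\<omega>. (Y1 \<omega> + Y2 \<omega>) * Z d \<omega> \<partial>P)
    \<le> (SUP d\<in>D. \<integral>\<omega>. Y1 \<omega> * Z d \<omega> \<partial>P) + (SUP d\<in>D. \<integral>\<omega>. Y2 \<omega> * Z d \<omega> \<partial>P)" .
qed

lemma upper_expectation_add_const:
  assumes "Linf P Y"
  shows "upper_expectation P D Z (\<lambda>\<omega>. Y \<omega> + a) = upper_expectation P D Z Y + a"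
proof -
  have "(\<integral>\<omega>. (Y \<omega> + a) * Z d \<omega> \<partial>P) = a + (\<integral>\<omega>. Y \<omega> * Z d \<omega> \<partial>P)" if "d \<in> D" for d
    using that assms density_integral[OF that]
    by (simp add: distrib_right integrable_weighted integrable_density)
  then show ?thesis
    unfolding upper_expectation_def
    using Sup_add_eq[OF bdd_above_weighted_expectation[OF assms] densities_nonempty, of a]
    by (simp add: add.commute cong: SUP_cong)
qed

lemma upper_expectation_cmult:
  assumes "Linf P Y" "0 \<le> c"
  shows "upper_expectation P D Z (\<lambda>\<omega>. c * Y \<omega>) = c * upper_expectation P D Z Y"
proof -
  have "mono ((*) c)"
    using \<open>0 \<le> c\<close> by (auto intro: monoI mult_left_mono)
  moreover have "continuous (at_left x) ((*) c)" for x :: real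
    by (intro continuous_intros)
  ultimately show ?thesis
    using continuous_at_Sup_mono[of "(*) c", OF _ _ _ bdd_above_weighted_expectation[OF assms(1)]]
    unfolding upper_expectation_def image_image
    by (simp add: mult.assoc densities_nonempty)
qed

lemma expectation_le_upper_expectation:
  assumes "Linf P Y"
  shows "(\<integral>\<omega>. Y \<omega> \<partial>P) \<le> upper_expectation P D Z Y"
proof -
  obtain d where "d \<in> D" "\<And>\<omega>. Z d \<omega> = 1"
    using constant_density by blast
  then show ?thesis
    unfolding upper_expectation_def
    using cSUP_upper[OF _ bdd_above_weighted_expectation[OF assms]] by fastforce
qed

lemma weighted_expectation_le_CVaR_objective:
  assumes "Linf P Y" "d \<in> D"
  shows "(\<integral>\<omega>. Y \<omega> * Z d \<omega> \<partial>P) \<le> s + 1 / \<alpha> * (\<integral>\<omega>. max (Y \<omega> - s) 0 \<partial>P)"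
proof -
  have Y: "integrable P Y"
    using Linf_integrable[OF finite_measure_axioms assms(1)] .
  have "(\<integral>\<omega>. Y \<omega> * Z d \<omega> \<partial>P) = s + (\<integral>\<omega>. (Y \<omega> - s) * Z d \<omega> \<partial>P)"
    using assms density_integral[OF assms(2)]
    by (simp add: left_diff_distrib integrable_weighted integrable_density)
  also have "(\<integral>\<omega>. (Y \<omega> - s) * Z d \<omega> \<partial>P) \<le> (\<integral>\<omega>. max (Y \<omega> - s) 0 * (1 / \<alpha>) \<partial>P)"
  proof (rule integral_mono_AE)
    show "integrable P (\<lambda>\<omega>. (Y \<omega> - s) * Z d \<omega>)"
      using assms by (simp add: left_diff_distrib integrable_weighted integrable_density)
    show "integrable P (\<lambda>\<omega>. max (Y \<omega> - s) 0 * (1 / \<alpha>))"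
      using Y by auto
    show "AE \<omega> in P. (Y \<omega> - s) * Z d \<omega> \<le> max (Y \<omega> - s) 0 * (1 / \<alpha>)"
      using density_bounds[OF assms(2)]
    proof eventually_elim
      case (elim \<omega>)
      then have "(Y \<omega> - s) * Z d \<omega> \<le> max (Y \<omega> - s) 0 * Z d \<omega>"
        by (intro mult_right_mono) auto
      also have "\<dots> \<le> max (Y \<omega> - s) 0 * (1 / \<alpha>)"
        using elim by (intro mult_left_mono) auto
      finally show ?case .
    qed
  qed
  finally show ?thesis
    by simp
qed

lemma upper_expectation_le_CVaR:
  assumes "Linf P Y"
  shows "upper_expectation P D Z Y \<le> CVaR \<alpha> P Y"
  unfolding CVaR_def upper_expectation_def
  using assms
  by (intro cINF_greatest cSUP_least densities_nonempty weighted_expectation_le_CVaR_objective) auto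

end

lemma powr_neg_inverse_power:
  fixes a :: real
  assumes "0 < a" "0 < n"
  shows "(a powr (- 1 / n)) ^ n = 1 / a"
proof -
  have "(a powr (- 1 / n)) ^ n = a powr (real n * (- 1 / n))"
    using assms by (simp add: powr_power)
  also have "\<dots> = 1 / a"
    using assms by (simp add: powr_minus divide_inverse)
  finally show ?thesis .
qed

lemma measurable_history_state: "i \<le> t \<Longrightarrow> (\<lambda>h. fst h i) \<in> H t \<rightarrow>\<^sub>M borel"
  unfolding H_def by (rule measurable_compose[OF measurable_fst measurable_component_singleton]) auto

lemma measurable_history_action: "i < t \<Longrightarrow> (\<lambda>h. snd h i) \<in> H t \<rightarrow>\<^sub>M borel"
  unfolding H_def by (rule measurable_compose[OF measurable_snd measurable_component_singleton]) auto

definition extend_history ::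
    "nat \<Rightarrow> (nat \<Rightarrow> 's) \<times> (nat \<Rightarrow> 'a) \<Rightarrow> 'a \<Rightarrow> 's \<Rightarrow> (nat \<Rightarrow> 's) \<times> (nat \<Rightarrow> 'a)" where
  "extend_history t h u y =
    (restrict ((fst h)(Suc t := y)) {..Suc t}, restrict ((snd h)(t := u)) {..<Suc t})"

lemma measurable_extend_history:
  "(\<lambda>((h, u), y). extend_history t h u y) \<in> (H t \<Otimes>\<^sub>M borel) \<Otimes>\<^sub>M borel \<rightarrow>\<^sub>M H (Suc t)"
proof -
  have "(\<lambda>((h, u), y). ((fst h)(Suc t := y)) i) \<in> (H t \<Otimes>\<^sub>M borel) \<Otimes>\<^sub>M borel \<rightarrow>\<^sub>M borel"
    if "i \<le> Suc t" for i
    using that by (cases "i = Suc t")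
      (auto simp: le_Suc_eq split_beta' intro!: measurable_compose[OF _ measurable_history_state[of i t]])
  moreover have "(\<lambda>((h, u), y). ((snd h)(t := u)) i) \<in> (H t \<Otimes>\<^sub>M borel) \<Otimes>\<^sub>M borel \<rightarrow>\<^sub>M borel"
    if "i < Suc t" for i
    using that by (cases "i = t")
      (auto simp: split_beta' intro!: measurable_compose[OF _ measurable_history_action[of i t]])
  ultimately show ?thesis
    unfolding extend_history_def H_def
    by (auto intro!: measurable_Pair measurable_restrict simp: split_beta')
qed

lemma extend_history_in_space: "h \<in> space (H t) \<Longrightarrow> extend_history t h u y \<in> space (H (Suc t))"
  using measurable_space[OF measurable_extend_history, of "((h, u), y)" t]
  by (simp add: space_pair_measure)

lemma measurable_return_extend_history:
  "h \<in> space (H t) \<Longrightarrow>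
    (\<lambda>y. return (H (Suc t)) (extend_history t h u y)) \<in> borel \<rightarrow>\<^sub>M prob_algebra (H (Suc t))"
proof -
  assume "h \<in> space (H t)"
  then have "(\<lambda>y. ((h, u), y)) \<in> borel \<rightarrow>\<^sub>M (H t \<Otimes>\<^sub>M borel) \<Otimes>\<^sub>M borel"
    by (intro measurable_Pair1') (simp add: space_pair_measure)
  from measurable_compose[OF measurable_compose[OF this measurable_extend_history]
      measurable_return_prob_space]
  show ?thesis
    by simp
qed

lemma initial_history_in_space:
  "(restrict (\<lambda>_. x) {..0}, restrict (\<lambda>_. undefined :: 'a::topological_space) {..<0}) \<in> space (H 0)"
  by (simp add: H_def space_pair_measure space_PiM)

definition history_density ::
    "(nat \<Rightarrow> 's \<Rightarrow> 's \<Rightarrow> 'a \<Rightarrow> real) \<Rightarrow> nat \<Rightarrow> (nat \<Rightarrow> 's) \<times> (nat \<Rightarrow> 'a) \<Rightarrow> real" where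
  "history_density \<xi> t \<omega> = (\<Prod>s<t. \<xi> s (fst \<omega> (Suc s)) (fst \<omega> s) (snd \<omega> s))"

lemma history_density_extend:
  "history_density \<xi> (Suc t) (extend_history t h u y) = history_density \<xi> t h * \<xi> t y (fst h t) u"
proof -
  have "history_density \<xi> t (extend_history t h u y) = history_density \<xi> t h"
    unfolding history_density_def by (intro prod.cong) (auto simp: extend_history_def)
  then show ?thesis
    by (simp add: history_density_def extend_history_def)
qed

lemma measurable_history_density:
  assumes "\<And>s. s < t \<Longrightarrow> (\<lambda>(y, x, u). \<xi> s y x u) \<in> borel_measurable (borel \<Otimes>\<^sub>M borel \<Otimes>\<^sub>M borel)"
  shows "history_density \<xi> t \<in> borel_measurable (H t)"
  unfolding history_density_def[abs_def]
proof (rule borel_measurable_prod)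
  fix s assume "s \<in> {..<t}"
  then have "(\<lambda>\<omega>. (fst \<omega> (Suc s), fst \<omega> s, snd \<omega> s)) \<in> H t \<rightarrow>\<^sub>M borel \<Otimes>\<^sub>M borel \<Otimes>\<^sub>M borel"
    by (intro measurable_Pair measurable_history_state measurable_history_action) auto
  from measurable_compose[OF this assms] \<open>s \<in> {..<t}\<close>
  show "(\<lambda>\<omega>. \<xi> s (fst \<omega> (Suc s)) (fst \<omega> s) (snd \<omega> s)) \<in> borel_measurable (H t)"
    by simp
qed

lemma nn_integral_Rset:
  assumes "\<nu> \<in> Rset \<alpha> T M"
  shows "(\<integral>\<^sup>+y. ennreal (\<nu> y) \<partial>M) = 1"
proof -
  have "(\<integral>y. \<nu> y \<partial>M) = 1" "AE y in M. 0 \<le> \<nu> y"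
    using assms by (auto simp: Rset_def elim: AE_mp)
  moreover from this(1) have "integrable M \<nu>"
    using not_integrable_integral_eq by fastforce
  ultimately show ?thesis
    by (simp add: nn_integral_eq_integral)
qed

lemma AE_bind_prob_algebra:
  assumes "M \<in> space (prob_algebra A)" "N \<in> A \<rightarrow>\<^sub>M prob_algebra B" "Measurable.pred B P"
  shows "(AE x in M \<bind> N. P x) \<longleftrightarrow> (AE x in M. AE y in N x. P y)"
proof -
  have "N \<in> M \<rightarrow>\<^sub>M subprob_algebra B"
    using assms(1) measurable_prob_algebraD[OF assms(2)]
    by (simp add: space_prob_algebra cong: measurable_cong_sets)
  then show ?thesis
    using AE_bind assms(3) by blast
qed

lemma nn_integral_bind_prob_algebra:
  assumes "M \<in> space (prob_algebra A)" "N \<in> A \<rightarrow>\<^sub>M prob_algebra B" "f \<in> borel_measurable B"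
  shows "(\<integral>\<^sup>+x. f x \<partial>(M \<bind> N)) = (\<integral>\<^sup>+x. \<integral>\<^sup>+y. f y \<partial>N x \<partial>M)"
proof -
  have "N \<in> M \<rightarrow>\<^sub>M subprob_algebra B"
    using assms(1) measurable_prob_algebraD[OF assms(2)]
    by (simp add: space_prob_algebra cong: measurable_cong_sets)
  then show ?thesis
    using nn_integral_bind assms(3) by blast
qed

lemma measurable_kernelQ:
  fixes PD :: "'w::topological_space measure"
    and f :: "'s::topological_space \<Rightarrow> 'a::topological_space \<Rightarrow> 'w \<Rightarrow> 's"
  assumes "prob_space PD" "sets PD = sets borel"
    and "(\<lambda>(x, u, d). f x u d) \<in> borel \<Otimes>\<^sub>M borel \<Otimes>\<^sub>M borel \<rightarrow>\<^sub>M borel"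
  shows "(\<lambda>(x, u). kernelQ PD f x u) \<in> borel \<Otimes>\<^sub>M borel \<rightarrow>\<^sub>M prob_algebra borel"
proof -
  have "(\<lambda>(z, d). (fst z, snd z, d))
      \<in> ((borel :: 's measure) \<Otimes>\<^sub>M (borel :: 'a measure)) \<Otimes>\<^sub>M (borel :: 'w measure)
      \<rightarrow>\<^sub>M borel \<Otimes>\<^sub>M borel \<Otimes>\<^sub>M borel"
    by measurable
  from measurable_compose[OF this assms(3)]
  have f: "(\<lambda>(z, d). f (fst z) (snd z) d) \<in> (borel \<Otimes>\<^sub>M borel) \<Otimes>\<^sub>M borel \<rightarrow>\<^sub>M borel"
    by (simp add: split_beta')
  have "(\<lambda>z. PD) \<in> borel \<Otimes>\<^sub>M borel \<rightarrow>\<^sub>M prob_algebra borel"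
    using assms(1,2) by (intro measurable_const) (auto simp: space_prob_algebra)
  from measurable_distr_prob_space2[OF this f] show ?thesis
    by (simp add: kernelQ_def case_prod_beta)
qed

locale controlled_process =
  fixes Q :: "'s::topological_space \<Rightarrow> 'a::topological_space \<Rightarrow> 's measure"
    and \<pi> :: "nat \<Rightarrow> (nat \<Rightarrow> 's) \<times> (nat \<Rightarrow> 'a) \<Rightarrow> 'a measure"
    and T :: nat
  assumes measurable_transition: "(\<lambda>(x, u). Q x u) \<in> borel \<Otimes>\<^sub>M borel \<rightarrow>\<^sub>M prob_algebra borel"
    and policy: "is_policy T \<pi>"
begin

lemma transition_in_prob_algebra: "Q x u \<in> space (prob_algebra borel)"
  using measurable_space[OF measurable_transition, of "(x, u)"] by (simp add: space_pair_measure)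

lemma sets_transition: "sets (Q x u) = sets borel"
  using transition_in_prob_algebra by (simp add: space_prob_algebra)

lemma prob_space_transition: "prob_space (Q x u)"
  using transition_in_prob_algebra by (simp add: space_prob_algebra)

lemma policy_in_prob_algebra: "t < T \<Longrightarrow> h \<in> space (H t) \<Longrightarrow> \<pi> t h \<in> space (prob_algebra borel)"
  using policy by (auto simp: is_policy_def intro: measurable_space)

definition transition_step ::
    "nat \<Rightarrow> (nat \<Rightarrow> 's) \<times> (nat \<Rightarrow> 'a) \<Rightarrow> 'a \<Rightarrow> ((nat \<Rightarrow> 's) \<times> (nat \<Rightarrow> 'a)) measure" where
  "transition_step t h u = Q (fst h t) u \<bind> (\<lambda>y. return (H (Suc t)) (extend_history t h u y))"

definition step_kernel :: "nat \<Rightarrow> (nat \<Rightarrow> 's) \<times> (nat \<Rightarrow> 'a) \<Rightarrow> ((nat \<Rightarrow> 's) \<times> (nat \<Rightarrow> 'a)) measure" where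
  "step_kernel t h = \<pi> t h \<bind> transition_step t h"

lemma Ptraj_Suc_step_kernel: "Ptraj Q \<pi> x (Suc t) = Ptraj Q \<pi> x t \<bind> step_kernel t"
  by (simp add: step_kernel_def[abs_def] transition_step_def[abs_def] extend_history_def)

lemma measurable_transition_step:
  "(\<lambda>(h, u). transition_step t h u) \<in> H t \<Otimes>\<^sub>M borel \<rightarrow>\<^sub>M prob_algebra (H (Suc t))"
proof -
  have "(\<lambda>z. (fst (fst z) t, snd z)) \<in> H t \<Otimes>\<^sub>M borel \<rightarrow>\<^sub>M borel \<Otimes>\<^sub>M borel"
    by (intro measurable_Pair measurable_compose[OF measurable_fst measurable_history_state]) auto
  from measurable_compose[OF this measurable_transition]
  have Q: "(\<lambda>z. Q (fst (fst z) t) (snd z)) \<in> H t \<Otimes>\<^sub>M borel \<rightarrow>\<^sub>M prob_algebra borel"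
    by simp
  have "(\<lambda>(z, y). return (H (Suc t)) (extend_history t (fst z) (snd z) y))
      \<in> (H t \<Otimes>\<^sub>M borel) \<Otimes>\<^sub>M borel \<rightarrow>\<^sub>M prob_algebra (H (Suc t))"
    using measurable_compose[OF measurable_extend_history measurable_return_prob_space]
    by (simp add: split_beta')
  from measurable_bind_prob_space2[OF Q this] show ?thesis
    by (simp add: transition_step_def case_prod_beta)
qed

lemma measurable_step_kernel:
  assumes "t < T"
  shows "step_kernel t \<in> H t \<rightarrow>\<^sub>M prob_algebra (H (Suc t))"
proof -
  have "\<pi> t \<in> H t \<rightarrow>\<^sub>M prob_algebra borel"
    using policy assms by (simp add: is_policy_def)
  from measurable_bind_prob_space2[OF this measurable_transition_step] show ?thesis
    by (simp add: step_kernel_def[abs_def])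
qed

lemma Ptraj_in_prob_algebra: "t \<le> T \<Longrightarrow> Ptraj Q \<pi> x t \<in> space (prob_algebra (H t))"
proof (induction t)
  case 0
  show ?case
    using initial_history_in_space[where 'a='a, of x] by (simp add: space_prob_algebra prob_space_return)
next
  case (Suc t)
  then have "Ptraj Q \<pi> x t \<in> space (prob_algebra (H t))"
    and "step_kernel t \<in> H t \<rightarrow>\<^sub>M prob_algebra (H (Suc t))"
    by (auto intro: measurable_step_kernel)
  from prob_space_bind'[OF this] sets_bind'[OF this] show ?case
    unfolding Ptraj_Suc_step_kernel by (simp add: space_prob_algebra)
qed

lemma space_Ptraj: "t \<le> T \<Longrightarrow> space (Ptraj Q \<pi> x t) = space (H t)"
  using Ptraj_in_prob_algebra[of t x] by (intro sets_eq_imp_space_eq) (simp add: space_prob_algebra)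

lemma measurable_transition_step_action:
  "h \<in> space (H t) \<Longrightarrow> (\<lambda>u. transition_step t h u) \<in> borel \<rightarrow>\<^sub>M prob_algebra (H (Suc t))"
  using measurable_compose[OF measurable_Pair1' measurable_transition_step] by simp

lemma AE_step_kernel:
  assumes "t < T" "h \<in> space (H t)" "Measurable.pred (H (Suc t)) P"
  shows "(AE \<omega> in step_kernel t h. P \<omega>)
    \<longleftrightarrow> (AE u in \<pi> t h. AE y in Q (fst h t) u. P (extend_history t h u y))"
proof -
  from policy_in_prob_algebra[OF assms(1,2)]
  have "(AE \<omega> in step_kernel t h. P \<omega>) \<longleftrightarrow> (AE u in \<pi> t h. AE \<omega> in transition_step t h u. P \<omega>)"
    unfolding step_kernel_def
    by (rule AE_bind_prob_algebra[OF _ measurable_transition_step_action[OF assms(2)] assms(3)])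
  also have "\<dots> \<longleftrightarrow> (AE u in \<pi> t h. AE y in Q (fst h t) u.
      AE \<omega> in return (H (Suc t)) (extend_history t h u y). P \<omega>)"
    unfolding transition_step_def
    by (intro AE_cong AE_bind_prob_algebra[OF transition_in_prob_algebra
          measurable_return_extend_history] assms)
  also have "\<dots> \<longleftrightarrow> (AE u in \<pi> t h. AE y in Q (fst h t) u. P (extend_history t h u y))"
    by (intro AE_cong AE_return extend_history_in_space assms)
  finally show ?thesis .
qed

lemma nn_integral_step_kernel:
  assumes "t < T" "h \<in> space (H t)" "g \<in> borel_measurable (H (Suc t))"
  shows "(\<integral>\<^sup>+\<omega>. g \<omega> \<partial>step_kernel t h)
    = (\<integral>\<^sup>+u. \<integral>\<^sup>+y. g (extend_history t h u y) \<partial>Q (fst h t) u \<partial>\<pi> t h)"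
proof -
  from policy_in_prob_algebra[OF assms(1,2)]
  have "(\<integral>\<^sup>+\<omega>. g \<omega> \<partial>step_kernel t h) = (\<integral>\<^sup>+u. \<integral>\<^sup>+\<omega>. g \<omega> \<partial>transition_step t h u \<partial>\<pi> t h)"
    unfolding step_kernel_def
    by (rule nn_integral_bind_prob_algebra[OF _ measurable_transition_step_action[OF assms(2)] assms(3)])
  also have "\<dots> = (\<integral>\<^sup>+u. \<integral>\<^sup>+y.
      \<integral>\<^sup>+\<omega>. g \<omega> \<partial>return (H (Suc t)) (extend_history t h u y) \<partial>Q (fst h t) u \<partial>\<pi> t h)"
    unfolding transition_step_def
    by (intro nn_integral_cong nn_integral_bind_prob_algebra[OF transition_in_prob_algebra
          measurable_return_extend_history] assms)
  also have "\<dots> = (\<integral>\<^sup>+u. \<integral>\<^sup>+y. g (extend_history t h u y) \<partial>Q (fst h t) u \<partial>\<pi> t h)"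
    by (intro nn_integral_cong nn_integral_return extend_history_in_space assms)
  finally show ?thesis .
qed

lemma Dset_Rset: "\<xi> \<in> Dset Q T \<alpha> \<Longrightarrow> t < T \<Longrightarrow> (\<lambda>y. \<xi> t y x u) \<in> Rset \<alpha> T (Q x u)"
  by (simp add: Dset_def)

lemma measurable_Dset_density:
  "\<xi> \<in> Dset Q T \<alpha> \<Longrightarrow> t \<le> T \<Longrightarrow> history_density \<xi> t \<in> borel_measurable (H t)"
  by (intro measurable_history_density) (auto simp: Dset_def)

lemma measurable_Dset_transition:
  "\<xi> \<in> Dset Q T \<alpha> \<Longrightarrow> t < T \<Longrightarrow> (\<lambda>y. \<xi> t y x u) \<in> borel_measurable (Q x u)"
  using Dset_Rset by (simp add: Rset_def sets_transition cong: measurable_cong_sets)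

lemma AE_step_kernel_history_density_bounds:
  assumes \<xi>: "\<xi> \<in> Dset Q T \<alpha>" and "t < T" "h \<in> space (H t)"
    and "0 \<le> history_density \<xi> t h" "history_density \<xi> t h \<le> (\<alpha> powr (- 1 / T)) ^ t"
  shows "AE \<omega> in step_kernel t h.
    0 \<le> history_density \<xi> (Suc t) \<omega> \<and> history_density \<xi> (Suc t) \<omega> \<le> (\<alpha> powr (- 1 / T)) ^ Suc t"
proof -
  define c where "c = \<alpha> powr (- 1 / T)"
  note h_bounds = assms(4,5)[folded c_def]
  have "0 \<le> c"
    by (simp add: c_def)
  have pred: "Measurable.pred (H (Suc t))
      (\<lambda>\<omega>. 0 \<le> history_density \<xi> (Suc t) \<omega> \<and> history_density \<xi> (Suc t) \<omega> \<le> c ^ Suc t)"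
    using measurable_Dset_density[OF \<xi> Suc_leI[OF \<open>t < T\<close>]] by measurable
  have extended: "AE y in Q (fst h t) u. 0 \<le> history_density \<xi> (Suc t) (extend_history t h u y)
      \<and> history_density \<xi> (Suc t) (extend_history t h u y) \<le> c ^ Suc t" for u
  proof -
    have "AE y in Q (fst h t) u. 0 \<le> \<xi> t y (fst h t) u \<and> \<xi> t y (fst h t) u \<le> c"
      using Dset_Rset[OF \<xi> \<open>t < T\<close>] by (simp add: Rset_def c_def)
    then show ?thesis
    proof eventually_elim
      case (elim y)
      then have "history_density \<xi> t h * \<xi> t y (fst h t) u \<le> c ^ t * c"
        using h_bounds \<open>0 \<le> c\<close> by (intro mult_mono) auto
      then show ?case
        using elim h_bounds by (simp add: history_density_extend mult.commute)
    qed
  qed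
  show ?thesis
    unfolding c_def[symmetric] AE_step_kernel[OF \<open>t < T\<close> \<open>h \<in> space (H t)\<close> pred]
    by (rule AE_I2) (rule extended)
qed

lemma AE_history_density_bounds:
  assumes \<xi>: "\<xi> \<in> Dset Q T \<alpha>" and "t \<le> T"
  shows "AE \<omega> in Ptraj Q \<pi> x t.
    0 \<le> history_density \<xi> t \<omega> \<and> history_density \<xi> t \<omega> \<le> (\<alpha> powr (- 1 / T)) ^ t"
  using \<open>t \<le> T\<close>
proof (induction t)
  case 0
  then show ?case
    by (simp add: history_density_def)
next
  case (Suc t)
  then have "t < T" "AE h in Ptraj Q \<pi> x t.
      0 \<le> history_density \<xi> t h \<and> history_density \<xi> t h \<le> (\<alpha> powr (- 1 / T)) ^ t"
    by simp_all
  from this(2) AE_space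
  have "AE h in Ptraj Q \<pi> x t. AE \<omega> in step_kernel t h.
      0 \<le> history_density \<xi> (Suc t) \<omega> \<and> history_density \<xi> (Suc t) \<omega> \<le> (\<alpha> powr (- 1 / T)) ^ Suc t"
  proof eventually_elim
    case (elim h)
    then have "h \<in> space (H t)"
      using \<open>t < T\<close> by (simp add: space_Ptraj)
    then show ?case
      using elim by (intro AE_step_kernel_history_density_bounds[OF \<xi> \<open>t < T\<close>]) auto
  qed
  moreover have "Measurable.pred (H (Suc t)) (\<lambda>\<omega>.
      0 \<le> history_density \<xi> (Suc t) \<omega> \<and> history_density \<xi> (Suc t) \<omega> \<le> (\<alpha> powr (- 1 / T)) ^ Suc t)"
    using measurable_Dset_density[OF \<xi> Suc.prems] by measurable
  moreover have "Ptraj Q \<pi> x t \<in> space (prob_algebra (H t))"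
    using \<open>t < T\<close> by (intro Ptraj_in_prob_algebra) simp
  ultimately show ?case
    unfolding Ptraj_Suc_step_kernel
    using AE_bind_prob_algebra[OF _ measurable_step_kernel[OF \<open>t < T\<close>]] by blast
qed

lemma nn_integral_step_kernel_history_density:
  assumes \<xi>: "\<xi> \<in> Dset Q T \<alpha>" and "t < T" "h \<in> space (H t)"
    and nonneg: "0 \<le> history_density \<xi> t h"
  shows "(\<integral>\<^sup>+\<omega>. ennreal (history_density \<xi> (Suc t) \<omega>) \<partial>step_kernel t h)
    = ennreal (history_density \<xi> t h)"
proof -
  have "(\<integral>\<^sup>+\<omega>. ennreal (history_density \<xi> (Suc t) \<omega>) \<partial>step_kernel t h)
      = (\<integral>\<^sup>+u. \<integral>\<^sup>+y. ennreal (history_density \<xi> (Suc t) (extend_history t h u y))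
          \<partial>Q (fst h t) u \<partial>\<pi> t h)"
    using measurable_Dset_density[OF \<xi> Suc_leI[OF \<open>t < T\<close>]] assms(2,3)
    by (intro nn_integral_step_kernel) measurable
  also have "\<dots> = (\<integral>\<^sup>+u. ennreal (history_density \<xi> t h)
      * (\<integral>\<^sup>+y. ennreal (\<xi> t y (fst h t) u) \<partial>Q (fst h t) u) \<partial>\<pi> t h)"
    unfolding history_density_extend ennreal_mult'[OF nonneg]
    using measurable_Dset_transition[OF \<xi> \<open>t < T\<close>]
    by (intro nn_integral_cong nn_integral_cmult) measurable
  also have "\<dots> = ennreal (history_density \<xi> t h)"
  proof -
    have "(\<integral>\<^sup>+y. ennreal (\<xi> t y (fst h t) u) \<partial>Q (fst h t) u) = 1" for u
      using Dset_Rset[OF \<xi> \<open>t < T\<close>] by (rule nn_integral_Rset)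
    moreover have "prob_space (\<pi> t h)"
      using policy_in_prob_algebra[OF assms(2,3)] by (simp add: space_prob_algebra)
    ultimately show ?thesis
      by (simp add: prob_space.emeasure_space_1)
  qed
  finally show ?thesis .
qed

lemma nn_integral_history_density:
  assumes \<xi>: "\<xi> \<in> Dset Q T \<alpha>" and "t \<le> T"
  shows "(\<integral>\<^sup>+\<omega>. ennreal (history_density \<xi> t \<omega>) \<partial>Ptraj Q \<pi> x t) = 1"
  using \<open>t \<le> T\<close>
proof (induction t)
  case 0
  then show ?case
    using initial_history_in_space[where 'a='a, of x] by (simp add: history_density_def)
next
  case (Suc t)
  then have "t < T"
    by simp
  have "(\<integral>\<^sup>+\<omega>. ennreal (history_density \<xi> (Suc t) \<omega>) \<partial>Ptraj Q \<pi> x (Suc t))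
      = (\<integral>\<^sup>+h. \<integral>\<^sup>+\<omega>. ennreal (history_density \<xi> (Suc t) \<omega>) \<partial>step_kernel t h \<partial>Ptraj Q \<pi> x t)"
    unfolding Ptraj_Suc_step_kernel using measurable_Dset_density[OF \<xi> Suc.prems]
    by (intro nn_integral_bind_prob_algebra[OF Ptraj_in_prob_algebra
          measurable_step_kernel[OF \<open>t < T\<close>]])
      (simp_all add: less_imp_le[OF \<open>t < T\<close>])
  also have "\<dots> = (\<integral>\<^sup>+h. ennreal (history_density \<xi> t h) \<partial>Ptraj Q \<pi> x t)"
    using AE_history_density_bounds[OF \<xi> less_imp_le[OF \<open>t < T\<close>], of x] AE_space
    by (intro nn_integral_cong_AE, eventually_elim)
      (use \<open>t < T\<close> in \<open>auto simp: space_Ptraj intro: nn_integral_step_kernel_history_density[OF \<xi>]\<close>)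
  also have "\<dots> = 1"
    using Suc by simp
  finally show ?case .
qed

lemma constant_one_in_Dset:
  assumes "0 < \<alpha>" "\<alpha> \<le> 1"
  shows "(\<lambda>_ _ _ _. 1) \<in> Dset Q T \<alpha>"
proof -
  have "\<alpha> powr 0 \<le> \<alpha> powr (- 1 / T)"
    using assms by (intro powr_mono') auto
  moreover have "(\<integral>y. 1 \<partial>Q x u) = (1 :: real)" for x u
    using prob_space_transition[of x u] by (simp add: prob_space.prob_space)
  ultimately show ?thesis
    using assms by (simp add: Dset_def Rset_def)
qed

lemma bounded_densities_Dset:
  assumes "0 < T" "0 < \<alpha>" "\<alpha> \<le> 1"
  shows "bounded_densities (Ptraj Q \<pi> x T) (Dset Q T \<alpha>) (\<lambda>\<xi>. history_density \<xi> T) \<alpha>"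
proof -
  have P: "Ptraj Q \<pi> x T \<in> space (prob_algebra (H T))"
    by (rule Ptraj_in_prob_algebra) simp
  show ?thesis
  proof (intro bounded_densities.intro bounded_densities_axioms.intro)
    show "prob_space (Ptraj Q \<pi> x T)"
      using P by (simp add: space_prob_algebra)
    fix \<xi> assume \<xi>: "\<xi> \<in> Dset Q T \<alpha>"
    show measurable: "history_density \<xi> T \<in> borel_measurable (Ptraj Q \<pi> x T)"
      using measurable_Dset_density[OF \<xi> order.refl] P
      by (simp add: space_prob_algebra cong: measurable_cong_sets)
    show bounds: "AE \<omega> in Ptraj Q \<pi> x T. 0 \<le> history_density \<xi> T \<omega> \<and> history_density \<xi> T \<omega> \<le> 1 / \<alpha>"
      using AE_history_density_bounds[OF \<xi> order.refl, of x]
      unfolding powr_neg_inverse_power[OF \<open>0 < \<alpha>\<close> \<open>0 < T\<close>] .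
    show "(\<integral>\<omega>. history_density \<xi> T \<omega> \<partial>Ptraj Q \<pi> x T) = 1"
      using bounds nn_integral_history_density[OF \<xi> order.refl, of x]
      by (subst integral_eq_nn_integral[OF measurable]) (auto elim: AE_mp)
  next
    show "\<exists>\<xi>\<in>Dset Q T \<alpha>. \<forall>\<omega>. history_density \<xi> T \<omega> = 1"
      using constant_one_in_Dset assms by (force simp: history_density_def)
  qed
qed

end

theorem lemma5:
  fixes PD :: "'w::polish_space measure"
    and f :: "'s::polish_space \<Rightarrow> 'a::polish_space \<Rightarrow> 'w \<Rightarrow> 's"
    and \<pi> :: "nat \<Rightarrow> (nat \<Rightarrow> 's) \<times> (nat \<Rightarrow> 'a) \<Rightarrow> 'a measure"
    and T :: nat and \<alpha> :: real and x :: 's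
  assumes T_pos: "0 < T"
    and alpha: "0 < \<alpha>" "\<alpha> \<le> 1"
    and PD: "prob_space PD" "sets PD = sets borel"
    and f_meas: "(\<lambda>(x, u, d). f x u d) \<in> (borel \<Otimes>\<^sub>M borel \<Otimes>\<^sub>M borel) \<rightarrow>\<^sub>M borel"
    and pol: "is_policy T \<pi>"
  shows "(\<forall>Y1 Y2. Linf (Px PD f \<pi> T x) Y1 \<longrightarrow> Linf (Px PD f \<pi> T x) Y2 \<longrightarrow>
            (AE \<omega> in Px PD f \<pi> T x. Y1 \<omega> \<le> Y2 \<omega>) \<longrightarrow>
            rho (kernelQ PD f) T \<alpha> (Px PD f \<pi> T x) Y1 \<le> rho (kernelQ PD f) T \<alpha> (Px PD f \<pi> T x) Y2)
       \<and> (\<forall>Y1 Y2. Linf (Px PD f \<pi> T x) Y1 \<longrightarrow> Linf (Px PD f \<pi> T x) Y2 \<longrightarrow>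
            rho (kernelQ PD f) T \<alpha> (Px PD f \<pi> T x) (\<lambda>\<omega>. Y1 \<omega> + Y2 \<omega>)
              \<le> rho (kernelQ PD f) T \<alpha> (Px PD f \<pi> T x) Y1 + rho (kernelQ PD f) T \<alpha> (Px PD f \<pi> T x) Y2)
       \<and> (\<forall>Y1 a. Linf (Px PD f \<pi> T x) Y1 \<longrightarrow>
            rho (kernelQ PD f) T \<alpha> (Px PD f \<pi> T x) (\<lambda>\<omega>. Y1 \<omega> + a)
              = rho (kernelQ PD f) T \<alpha> (Px PD f \<pi> T x) Y1 + a)
       \<and> (\<forall>Y1 c. Linf (Px PD f \<pi> T x) Y1 \<longrightarrow> 0 \<le> c \<longrightarrow>
            rho (kernelQ PD f) T \<alpha> (Px PD f \<pi> T x) (\<lambda>\<omega>. c * Y1 \<omega>)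
              = c * rho (kernelQ PD f) T \<alpha> (Px PD f \<pi> T x) Y1)
       \<and> (\<forall>Y. Linf (Px PD f \<pi> T x) Y \<longrightarrow>
            (\<integral>\<omega>. Y \<omega> \<partial>Px PD f \<pi> T x) \<le> rho (kernelQ PD f) T \<alpha> (Px PD f \<pi> T x) Y
            \<and> rho (kernelQ PD f) T \<alpha> (Px PD f \<pi> T x) Y \<le> CVaR \<alpha> (Px PD f \<pi> T x) Y)"
proof -
  interpret controlled_process "kernelQ PD f" \<pi> T
    using measurable_kernelQ[OF PD f_meas] pol by unfold_locales
  interpret bounded_densities "Px PD f \<pi> T x" "Dset (kernelQ PD f) T \<alpha>" "\<lambda>\<xi>. history_density \<xi> T" \<alpha>
    unfolding Px_def by (rule bounded_densities_Dset[OF T_pos alpha])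
  have rho_eq: "rho (kernelQ PD f) T \<alpha> (Px PD f \<pi> T x)
      = upper_expectation (Px PD f \<pi> T x) (Dset (kernelQ PD f) T \<alpha>) (\<lambda>\<xi>. history_density \<xi> T)"
    by (simp add: fun_eq_iff rho_def upper_expectation_def history_density_def)
  show ?thesis
    unfolding rho_eq
    by (simp add: upper_expectation_mono upper_expectation_add upper_expectation_add_const
        upper_expectation_cmult expectation_le_upper_expectation upper_expectation_le_CVaR)
qed

end
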